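(* Let $q\ge1$, $\lambda$ a primitive $q$th root of unity, $g(z)=\lambda z+O(z^2)$ holomorphic near $0$ with $f:=g^{\circ q}$ of the form $f(z)=z+z^{q+1}+bz^{2q+1}+O(z^{2q+2})$, and $0<r_0<1$ such that $f$ is univalent in a neighborhood of $\overline{\mathbb D}(0,r_0)$, $0$ is its only fixed point in $\overline{\mathbb D}(0,r_0)$ and $\operatorname{Re}(f')>0$ there. Let $g_n(z)=\lambda_nz+O(z^2)$, $|\lambda_n|\ne1$, with $f_n:=g_n^{\circ q}$ holomorphic near $\overline{\mathbb D}(0,r_0)$ and $f_n\to f$ uniformly on $\overline{\mathbb D}(0,r_0)$; for large $n$ the fixed points of $f_n$ in $\overline{\mathbb D}(0,r_0)$ are $0$ and the points of a $q$-cycle $\mathscr O_n$ of $g_n$. Let $0<r_1<r_0/2$ be such that $\overline{\mathbb D}(0,r_1)$ is mapped univalently into $\mathbb D(0,r_0)$ by $f$ and $f^{-1}$ and $\sup_{|z|\le r_1}|f_n(z)-z|\le r_1/2$ for all large $n$. Then there is $0<r_2<r_1$ such that for all sufficiently large $n$: if $z_0$, $z_1:=f_n(z_0)$, $z_2:=f_n(z_1)$ lie in $\mathbb D(0,r_2)$ and are not fixed by $f_n$, then the segment $[z_1,z_2]$ and the curve $f_n([z_0,z_1])$ are homotopic (with fixed endpoints) in $\mathbb D(0,r_1)\setminus(\{0\}\cup\mathscr O_n)$. *)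

theory Defs
  imports "HOL-Complex_Analysis.Complex_Analysis" "HOL-Library.Landau_Symbols"
begin

definition primitive_root_of_unity :: "nat \<Rightarrow> complex \<Rightarrow> bool" where
  "primitive_root_of_unity q lam \<longleftrightarrow> q \<ge> 1 \<and> lam ^ q = 1 \<and> (\<forall>k. 0 < k \<and> k < q \<longrightarrow> lam ^ k \<noteq> 1)"

definition is_q_cycle :: "(complex \<Rightarrow> complex) \<Rightarrow> nat \<Rightarrow> complex set \<Rightarrow> bool" where
  "is_q_cycle g q C \<longleftrightarrow> (\<exists>w. (g ^^ q) w = w \<and> C = (\<lambda>k. (g ^^ k) w) ` {..<q} \<and> card C = q)"

end

theory Submission
  imports Defs
begin

text \<open>Since \<open>f'(0) = 1\<close> and, by the Cauchy estimates, \<open>f\<^sub>n'\<close> converges to \<open>f'\<close>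
  uniformly near 0, on a small disc \<open>D(0,R)\<close> the displacement \<open>z \<mapsto> f\<^sub>n(z) - z\<close> is
  \<open>1/4\<close>-Lipschitz for all large \<open>n\<close>. For such a map, every point of the straight-line
  homotopy between \<open>[z\<^sub>1,z\<^sub>2]\<close> and \<open>f\<^sub>n([z\<^sub>0,z\<^sub>1])\<close> lies within
  \<open>(9/16)|z\<^sub>0 - p|\<close> of \<open>z\<^sub>0\<close> for every fixed point \<open>p\<close> of \<open>f\<^sub>n\<close> in \<open>D(0,R)\<close>;
  taking \<open>p = 0\<close> keeps the homotopy inside \<open>D(0,R)\<close> when \<open>z\<^sub>0 \<in> D(0,R/2)\<close>, and taking
  \<open>p\<close> a point of the homotopy shows that it meets no fixed point, in particular neither 0
  nor \<open>O\<^sub>n\<close>.\<close>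

lemma linear_homotopy_segment_subset_cball:
  fixes F :: "'a::real_normed_vector \<Rightarrow> 'a"
  assumes L: "\<epsilon>-lipschitz_on S (\<lambda>z. F z - z)" and "convex S"
    and p: "p \<in> S" "F p = p" and z0: "z0 \<in> S" "F z0 \<in> S" and t: "t \<in> {0..1}"
  shows "closed_segment (linepath (F z0) (F (F z0)) t) (F (linepath z0 (F z0) t))
           \<subseteq> cball z0 (\<epsilon> * (2 + \<epsilon>) * norm (z0 - p))"
proof -
  define D where "D z = F z - z" for z
  define u where "u = norm (z0 - p)"
  define w where "w = linepath z0 (F z0) t"
  have \<epsilon>: "0 \<le> \<epsilon>" using lipschitz_on_nonneg[OF L] .
  have D_le: "norm (D z) \<le> \<epsilon> * norm (z - p)" if "z \<in> S" for z
    using lipschitz_onD[OF L that p(1)] p(2) by (simp add: D_def dist_norm)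
  have t_le: "norm (t *\<^sub>R x) \<le> norm x" for x :: 'a
    using t by (simp add: mult_left_le_one_le)
  have w: "w \<in> S"
    using linepath_in_path[OF t] closed_segment_subset[OF z0 \<open>convex S\<close>] by (auto simp: w_def)
  have Dz0: "norm (D z0) \<le> \<epsilon> * u" using D_le[OF z0(1)] by (simp add: u_def)
  have "norm (F z0 - p) \<le> (1 + \<epsilon>) * u"
    using norm_triangle_ineq[of "z0 - p" "D z0"] Dz0 by (simp add: D_def u_def algebra_simps)
  then have Dz1: "norm (D (F z0)) \<le> \<epsilon> * ((1 + \<epsilon>) * u)"
    using D_le[OF z0(2)] \<epsilon> by (meson mult_left_mono order_trans)
  have "norm (w - p) \<le> (1 + \<epsilon>) * u"
  proof -
    have "w - p = (z0 - p) + t *\<^sub>R D z0" by (simp add: w_def D_def linepath_def algebra_simps)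
    then show ?thesis
      using norm_triangle_ineq[of "z0 - p" "t *\<^sub>R D z0"] t_le[of "D z0"] Dz0
      by (simp add: u_def algebra_simps)
  qed
  then have Dw: "norm (D w) \<le> \<epsilon> * ((1 + \<epsilon>) * u)"
    using D_le[OF w] \<epsilon> by (meson mult_left_mono order_trans)
  have radius_eq: "\<epsilon> * u + \<epsilon> * ((1 + \<epsilon>) * u) = \<epsilon> * (2 + \<epsilon>) * u" by (simp add: algebra_simps)
  have "norm (linepath (F z0) (F (F z0)) t - z0) \<le> \<epsilon> * (2 + \<epsilon>) * u"
  proof -
    have "linepath (F z0) (F (F z0)) t - z0 = D z0 + t *\<^sub>R D (F z0)"
      by (simp add: D_def linepath_def algebra_simps)
    then show ?thesis
      using norm_triangle_ineq[of "D z0" "t *\<^sub>R D (F z0)"] t_le[of "D (F z0)"] Dz0 Dz1 radius_eq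
      by simp
  qed
  moreover have "norm (F w - z0) \<le> \<epsilon> * (2 + \<epsilon>) * u"
  proof -
    have "F w - z0 = t *\<^sub>R D z0 + D w" by (simp add: D_def w_def linepath_def algebra_simps)
    then show ?thesis
      using norm_triangle_ineq[of "t *\<^sub>R D z0" "D w"] t_le[of "D z0"] Dz0 Dw radius_eq
      by simp
  qed
  ultimately show ?thesis
    by (intro closed_segment_subset convex_cball) (auto simp: w_def u_def dist_norm norm_minus_commute)
qed

lemma homotopic_paths_linepath_image_avoiding_fixpoints:
  fixes F :: "'a::real_normed_vector \<Rightarrow> 'a"
  assumes L: "\<epsilon>-lipschitz_on (ball c R) (\<lambda>z. F z - z)" and \<epsilon>: "\<epsilon> * (2 + \<epsilon>) < 1"
    and c: "F c = c" and z0: "z0 \<in> ball c (R / 2)" "F z0 \<noteq> z0"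
  shows "homotopic_paths {x \<in> ball c R. F x \<noteq> x}
           (linepath (F z0) (F (F z0))) (F \<circ> linepath z0 (F z0))"
proof (rule homotopic_paths_linear)
  define \<rho> where "\<rho> = \<epsilon> * (2 + \<epsilon>)"
  have \<epsilon>0: "0 \<le> \<epsilon>" using lipschitz_on_nonneg[OF L] .
  have \<rho>: "0 \<le> \<rho>" "\<rho> < 1" using \<epsilon> \<epsilon>0 by (simp_all add: \<rho>_def)
  have "0 < R" using z0(1) zero_le_dist[of c z0] unfolding mem_ball by linarith
  then have c_in: "c \<in> ball c R" and z0_in: "z0 \<in> ball c R" using z0(1) by auto
  have "\<epsilon> < 1" using \<epsilon> \<epsilon>0 mult_left_mono[of 1 "2 + \<epsilon>" \<epsilon>] by simp
  have "dist z0 (F z0) \<le> \<epsilon> * dist c z0"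
    using lipschitz_onD[OF L z0_in c_in] c by (simp add: dist_norm norm_minus_commute)
  also have "\<dots> \<le> dist c z0" using \<open>\<epsilon> < 1\<close> \<epsilon>0 by (simp add: mult_left_le_one_le)
  finally have z1_in: "F z0 \<in> ball c R" using z0(1) dist_triangle[of c "F z0" z0] by simp
  have "continuous_on (ball c R) (\<lambda>z. (F z - z) + z)"
    by (intro continuous_intros lipschitz_on_continuous_on[OF L])
  then have contF: "continuous_on (ball c R) F" by simp
  have seg: "closed_segment z0 (F z0) \<subseteq> ball c R"
    using z0_in z1_in by (simp add: closed_segment_subset)
  show "path (linepath (F z0) (F (F z0)))" by simp
  show "path (F \<circ> linepath z0 (F z0))"
    using seg by (intro path_continuous_image continuous_on_subset[OF contF]) auto
  show "pathstart (F \<circ> linepath z0 (F z0)) = pathstart (linepath (F z0) (F (F z0)))"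
    and "pathfinish (F \<circ> linepath z0 (F z0)) = pathfinish (linepath (F z0) (F (F z0)))"
    by (simp_all add: pathstart_compose pathfinish_compose)
  fix t :: real assume t: "t \<in> {0..1}"
  note near_start = linear_homotopy_segment_subset_cball[OF L convex_ball _ _ z0_in z1_in t]
  show "closed_segment (linepath (F z0) (F (F z0)) t) ((F \<circ> linepath z0 (F z0)) t)
          \<subseteq> {x \<in> ball c R. F x \<noteq> x}"
  proof
    fix x assume x: "x \<in> closed_segment (linepath (F z0) (F (F z0)) t) ((F \<circ> linepath z0 (F z0)) t)"
    have "dist z0 x \<le> \<rho> * dist c z0"
      using near_start[OF c_in c] x by (auto simp: \<rho>_def dist_norm norm_minus_commute)
    also have "\<dots> \<le> dist c z0" using \<rho> by (simp add: mult_left_le_one_le)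
    finally have "dist c x < R" using z0(1) dist_triangle[of c x z0] by simp
    moreover have "F x \<noteq> x"
    proof
      assume "F x = x"
      with \<open>dist c x < R\<close> have "dist z0 x \<le> \<rho> * dist z0 x"
        using near_start[of x] x by (auto simp: \<rho>_def dist_norm)
      then have "x = z0" using \<rho>(2) mult_strict_right_mono[of \<rho> 1 "dist z0 x"] by fastforce
      with \<open>F x = x\<close> z0(2) show False by simp
    qed
    ultimately show "x \<in> {x \<in> ball c R. F x \<noteq> x}" by simp
  qed
qed

lemma deriv_near_one_imp_lipschitz_minus_id:
  fixes F :: "complex \<Rightarrow> complex"
  assumes S: "open S" "convex S" "F holomorphic_on S"
    and \<epsilon>: "0 \<le> \<epsilon>" "\<forall>z\<in>S. norm (deriv F z - 1) \<le> \<epsilon>"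
  shows "\<epsilon>-lipschitz_on S (\<lambda>z. F z - z)"
proof (rule lipschitz_onI)
  fix a b assume ab: "a \<in> S" "b \<in> S"
  have "norm ((F a - a) - (F b - b)) \<le> \<epsilon> * norm (a - b)"
  proof (rule field_differentiable_bound[OF S(2)])
    fix z assume "z \<in> S"
    show "((\<lambda>z. F z - z) has_field_derivative deriv F z - 1) (at z within S)"
      using holomorphic_derivI[OF S(3,1) \<open>z \<in> S\<close>] by (auto intro!: derivative_eq_intros)
  qed (use \<epsilon> ab in auto)
  then show "dist (F a - a) (F b - b) \<le> \<epsilon> * dist a b" by (simp add: dist_norm)
qed (rule \<epsilon>(1))

lemma has_field_derivative_zero_if_bigo_power:
  fixes h :: "complex \<Rightarrow> complex"
  assumes h: "h \<in> O[at 0](\<lambda>z. z ^ k)" and k: "2 \<le> k" and h0: "h 0 = 0"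
  shows "(h has_field_derivative 0) (at 0)"
proof -
  obtain c where c: "eventually (\<lambda>z. norm (h z) \<le> c * norm (z ^ k)) (at 0)"
    using h by (elim landau_o.bigE)
  have "eventually (\<lambda>z. z \<noteq> 0) (at (0::complex))" by (simp add: eventually_at_filter)
  with c have "eventually (\<lambda>z. norm (h z / z) \<le> c * norm z ^ (k - 1)) (at 0)"
  proof eventually_elim
    case (elim z)
    have "norm (z ^ k) = norm z * norm z ^ (k - 1)"
      using k by (metis Suc_diff_1 norm_power not_numeral_le_zero not_gr_zero power_Suc)
    with elim show ?case by (simp add: norm_divide divide_le_eq mult_ac)
  qed
  moreover have "isCont (\<lambda>z::complex. c * norm z ^ (k - 1)) 0"
    by (intro continuous_intros)
  then have "((\<lambda>z. c * norm z ^ (k - 1)) \<longlongrightarrow> 0) (at (0::complex))"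
    using k by (simp add: isCont_def power_0_left)
  ultimately have "((\<lambda>z. h z / z) \<longlongrightarrow> 0) (at 0)" by (rule Lim_null_comparison)
  then show ?thesis using h0 by (simp add: DERIV_def)
qed

lemma parabolic_expansion_has_field_derivative_one:
  fixes f :: "complex \<Rightarrow> complex"
  assumes q: "1 \<le> q" and f0: "f 0 = 0"
    and f: "(\<lambda>z. f z - (z + z ^ (q + 1) + b * z ^ (2 * q + 1))) \<in> O[at 0](\<lambda>z. z ^ (2 * q + 2))"
  shows "(f has_field_derivative 1) (at 0)"
proof -
  define h where "h = (\<lambda>z. f z - (z + z ^ (q + 1) + b * z ^ (2 * q + 1)))"
  have "(h has_field_derivative 0) (at 0)"
    using f f0 unfolding h_def by (intro has_field_derivative_zero_if_bigo_power[where k = "2 * q + 2"]) auto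
  then have "((\<lambda>z. h z + (z + z ^ (q + 1) + b * z ^ (2 * q + 1))) has_field_derivative 1) (at 0)"
    using q by (auto intro!: derivative_eq_intros simp: power_0_left)
  then show ?thesis by (simp add: h_def)
qed

lemma norm_deriv_diff_le:
  fixes F G :: "complex \<Rightarrow> complex"
  assumes T: "open T" "cball \<xi> r \<subseteq> T" "F holomorphic_on T" "G holomorphic_on T"
    and r: "0 < r" and e: "\<forall>z\<in>cball \<xi> r. norm (F z - G z) \<le> e"
  shows "norm (deriv F \<xi> - deriv G \<xi>) \<le> e / r"
proof -
  have hol: "(\<lambda>z. F z - G z) holomorphic_on T" using T by (intro holomorphic_intros)
  have "norm ((deriv ^^ 1) (\<lambda>z. F z - G z) \<xi>) \<le> fact 1 * e / r ^ 1"
  proof (rule Cauchy_inequality[OF _ _ r])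
    show "(\<lambda>z. F z - G z) holomorphic_on ball \<xi> r"
      using hol T(2) ball_subset_cball by (blast intro: holomorphic_on_subset)
    show "continuous_on (cball \<xi> r) (\<lambda>z. F z - G z)"
      using holomorphic_on_imp_continuous_on[OF hol] T(2) by (rule continuous_on_subset)
  qed (use e in \<open>auto simp: dist_norm\<close>)
  moreover have "deriv (\<lambda>z. F z - G z) \<xi> = deriv F \<xi> - deriv G \<xi>"
    using T r by (intro deriv_diff holomorphic_on_imp_differentiable_at) auto
  ultimately show ?thesis by simp
qed

lemma uniform_limit_deriv_half_ball:
  fixes f :: "complex \<Rightarrow> complex" and F :: "nat \<Rightarrow> complex \<Rightarrow> complex"
  assumes S: "open S" "cball c r \<subseteq> S" "f holomorphic_on S" and r: "0 < r"
    and F_hol: "\<forall>n. \<exists>T. open T \<and> cball c r \<subseteq> T \<and> F n holomorphic_on T"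
    and lim: "uniform_limit (cball c r) F f sequentially"
  shows "uniform_limit (ball c (r / 2)) (\<lambda>n. deriv (F n)) (deriv f) sequentially"
proof (rule uniform_limitI)
  fix e :: real assume e: "0 < e"
  then have "eventually (\<lambda>n. \<forall>z\<in>cball c r. dist (F n z) (f z) < e * r / 4) sequentially"
    using r by (intro uniform_limitD[OF lim]) simp
  then show "eventually (\<lambda>n. \<forall>z\<in>ball c (r / 2). dist (deriv (F n) z) (deriv f z) < e) sequentially"
  proof eventually_elim
    case (elim n)
    obtain T where T: "open T" "cball c r \<subseteq> T" "F n holomorphic_on T" using F_hol by blast
    show ?case
    proof
      fix z assume z: "z \<in> ball c (r / 2)"
      have sub: "cball z (r / 2) \<subseteq> cball c r"
        using z by (simp add: cball_subset_cball_iff dist_commute)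
      have "norm (deriv (F n) z - deriv f z) \<le> (e * r / 4) / (r / 2)"
      proof (rule norm_deriv_diff_le[of "T \<inter> S"])
        show "\<forall>x\<in>cball z (r / 2). norm (F n x - f x) \<le> e * r / 4"
          using elim sub by (force simp: dist_norm)
      qed (use T S sub r in \<open>auto intro: holomorphic_on_subset\<close>)
      also have "\<dots> < e" using r e by simp
      finally show "dist (deriv (F n) z) (deriv f z) < e" by (simp add: dist_norm)
    qed
  qed
qed

lemma eventually_deriv_uniformly_close:
  fixes f :: "complex \<Rightarrow> complex" and F :: "nat \<Rightarrow> complex \<Rightarrow> complex"
  assumes S: "open S" "cball c r \<subseteq> S" "f holomorphic_on S" and r: "0 < r"
    and F_hol: "\<forall>n. \<exists>T. open T \<and> cball c r \<subseteq> T \<and> F n holomorphic_on T"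
    and lim: "uniform_limit (cball c r) F f sequentially" and \<epsilon>: "0 < \<epsilon>"
  obtains d where "0 < d"
    "eventually (\<lambda>n. \<forall>z\<in>ball c d. norm (deriv (F n) z - deriv f c) \<le> \<epsilon>) sequentially"
proof -
  have c: "c \<in> S" using S(2) r by auto
  have "continuous_on S (deriv f)"
    by (rule holomorphic_on_imp_continuous_on[OF holomorphic_deriv[OF S(3,1)]])
  then obtain d1 where d1: "0 < d1" "\<forall>z\<in>S. dist z c < d1 \<longrightarrow> dist (deriv f z) (deriv f c) < \<epsilon> / 2"
    using c \<epsilon> unfolding continuous_on_iff by (metis half_gt_zero)
  define d where "d = min d1 (r / 2)"
  have "ball c d \<subseteq> cball c r"
    using r by (intro subset_trans[OF ball_subset_cball]) (simp add: d_def cball_subset_cball_iff min_le_iff_disj)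
  with S(2) have dS: "ball c d \<subseteq> S" by blast
  have "eventually (\<lambda>n. \<forall>z\<in>ball c (r / 2). dist (deriv (F n) z) (deriv f z) < \<epsilon> / 2) sequentially"
    using \<epsilon> by (intro uniform_limitD[OF uniform_limit_deriv_half_ball[OF S r F_hol lim]]) simp
  then have "eventually (\<lambda>n. \<forall>z\<in>ball c d. norm (deriv (F n) z - deriv f c) \<le> \<epsilon>) sequentially"
  proof eventually_elim
    case (elim n)
    show ?case
    proof
      fix z assume z: "z \<in> ball c d"
      have "dist (deriv (F n) z) (deriv f z) < \<epsilon> / 2" using elim z by (simp add: d_def)
      moreover have "dist (deriv f z) (deriv f c) < \<epsilon> / 2"
      proof -
        have "z \<in> S" using z dS by blast
        moreover have "dist z c < d1" using z by (simp add: d_def dist_commute)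
        ultimately show ?thesis using d1(2) by blast
      qed
      ultimately show "norm (deriv (F n) z - deriv f c) \<le> \<epsilon>"
        using dist_triangle[of "deriv (F n) z" "deriv f c" "deriv f z"] by (simp add: dist_norm)
    qed
  qed
  moreover have "0 < d" using d1 r by (simp add: d_def)
  ultimately show thesis using that by blast
qed

theorem lemma4p3:
  fixes q :: nat and lam b :: complex and g f :: "complex \<Rightarrow> complex"
    and gn fn :: "nat \<Rightarrow> complex \<Rightarrow> complex" and lamn :: "nat \<Rightarrow> complex"
    and Orb :: "nat \<Rightarrow> complex set" and r0 r1 :: real and S :: "complex set"
  assumes q: "q \<ge> 1"
    and lam: "primitive_root_of_unity q lam"
    and g_hol: "\<exists>U. open U \<and> 0 \<in> U \<and> g holomorphic_on U"
    and g0: "g 0 = 0" and g'0: "deriv g 0 = lam"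
    and f_def: "f = g ^^ q"
    and f_exp: "(\<lambda>z. f z - (z + z ^ (q + 1) + b * z ^ (2 * q + 1))) \<in> O[at 0](\<lambda>z. z ^ (2 * q + 2))"
    and r0: "0 < r0" "r0 < 1"
    and S: "open S" "cball 0 r0 \<subseteq> S" "f holomorphic_on S" "inj_on f S"
    and f_fix: "\<forall>z\<in>cball 0 r0. f z = z \<longrightarrow> z = 0"
    and f_Re: "\<forall>z\<in>cball 0 r0. Re (deriv f z) > 0"
    and gn_hol: "\<forall>n. \<exists>U. open U \<and> 0 \<in> U \<and> gn n holomorphic_on U"
    and gn0: "\<forall>n. gn n 0 = 0" and gn'0: "\<forall>n. deriv (gn n) 0 = lamn n"
    and lamn: "\<forall>n. norm (lamn n) \<noteq> 1"
    and fn_def: "\<forall>n. fn n = gn n ^^ q"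
    and fn_hol: "\<forall>n. \<exists>T. open T \<and> cball 0 r0 \<subseteq> T \<and> fn n holomorphic_on T"
    and fn_lim: "uniform_limit (cball 0 r0) fn f sequentially"
    and fn_fix: "eventually (\<lambda>n. is_q_cycle (gn n) q (Orb n) \<and> 0 \<notin> Orb n \<and>
                   {z\<in>cball 0 r0. fn n z = z} = {0} \<union> Orb n) sequentially"
    and r1: "0 < r1" "r1 < r0 / 2"
    and r1_f: "f ` cball 0 r1 \<subseteq> ball 0 r0"
    and r1_finv: "cball 0 r1 \<subseteq> f ` S" "inj_on (inv_into S f) (cball 0 r1)"
                 "inv_into S f ` cball 0 r1 \<subseteq> ball 0 r0"
    and r1_fn: "eventually (\<lambda>n. \<forall>z\<in>cball 0 r1. norm (fn n z - z) \<le> r1 / 2) sequentially"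
  shows "\<exists>r2. 0 < r2 \<and> r2 < r1 \<and>
           eventually (\<lambda>n. \<forall>z0 z1 z2. z1 = fn n z0 \<and> z2 = fn n z1 \<and>
               z0 \<in> ball 0 r2 \<and> z1 \<in> ball 0 r2 \<and> z2 \<in> ball 0 r2 \<and>
               fn n z0 \<noteq> z0 \<and> fn n z1 \<noteq> z1 \<and> fn n z2 \<noteq> z2 \<longrightarrow>
               homotopic_paths (ball 0 r1 - ({0} \<union> Orb n))
                 (linepath z1 z2) (fn n \<circ> linepath z0 z1)) sequentially"
proof -
  have f0: "f 0 = 0" unfolding f_def using g0 by (induction q) simp_all
  have "deriv f 0 = 1"
    using parabolic_expansion_has_field_derivative_one[OF q f0 f_exp] by (rule DERIV_imp_deriv)
  then obtain d where d: "0 < d"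
    and deriv_fn: "eventually (\<lambda>n. \<forall>z\<in>ball 0 d. norm (deriv (fn n) z - 1) \<le> 1 / 4) sequentially"
    using eventually_deriv_uniformly_close[OF S(1-3) r0(1) fn_hol fn_lim, of "1 / 4"] by auto
  define R where "R = min d r1"
  have R: "0 < R" "R \<le> r1" "ball 0 R \<subseteq> ball 0 d" "ball 0 R \<subseteq> cball 0 r0"
    using d r1 by (auto simp: R_def)
  have good: "eventually (\<lambda>n. (1 / 4)-lipschitz_on (ball 0 R) (\<lambda>z. fn n z - z) \<and>
                {0} \<union> Orb n \<subseteq> {z. fn n z = z}) sequentially"
    using deriv_fn fn_fix
  proof eventually_elim
    case (elim n)
    obtain T where "cball 0 r0 \<subseteq> T" "fn n holomorphic_on T" using fn_hol by blast
    then have "fn n holomorphic_on ball 0 R" using R(4) by (blast intro: holomorphic_on_subset)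
    with R elim show ?case by (auto intro!: deriv_near_one_imp_lipschitz_minus_id)
  qed
  have "homotopic_paths (ball 0 r1 - ({0} \<union> Orb n))
          (linepath (fn n z0) (fn n (fn n z0))) (fn n \<circ> linepath z0 (fn n z0))"
    if L: "(1 / 4)-lipschitz_on (ball 0 R) (\<lambda>z. fn n z - z)"
      and fixed: "{0} \<union> Orb n \<subseteq> {z. fn n z = z}"
      and z0: "z0 \<in> ball 0 (R / 2)" "fn n z0 \<noteq> z0" for n z0
    by (rule homotopic_paths_subset[OF homotopic_paths_linepath_image_avoiding_fixpoints[OF L _ _ z0]])
       (use fixed R in auto)
  then show ?thesis
    using good R by (intro exI[of _ "R / 2"]) (auto elim!: eventually_mono)
qed

end
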